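(* Let $\mu>0$, $\alpha>0$, $f(x)=xe^{-x}$, and let $\beta\in L^\infty_+(0,+\infty)$ satisfy $\int_0^{\infty}\beta(a)e^{-\mu a}\,da=1$. Let $a^\star=\sup\{a>0:\int_a^\infty\beta(\sigma)e^{-\mu\sigma}\,d\sigma>0\}$ and $\widehat M_0=\{u\in L^1_+(0,\infty):\int_0^{a^\star}u(a)\,da>0\}$. For each $u_0\in\widehat M_0$, there exists $t_0=t_0(u_0)>0$ such that $b(t)>0$ for all $t\ge t_0$, where $b$ is the unique continuous solution of $$b(t)=\alpha f\Big(\int_t^\infty\beta(a)e^{-\mu t}u_0(a-t)\,da+\int_0^t\beta(a)e^{-\mu a}b(t-a)\,da\Big),\quad t\ge0$$ (equivalently, $\int_0^\infty\beta(a)u(t,a)\,da>0$ for all $t\ge t_0$, where $u$ is the solution of the age-structured model below).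
   Context: The model is $\partial_tu+\partial_au=-\mu u$ ($t,a>0$), $u(t,0)=\alpha f(\int_0^\infty\beta(a)u(t,a)\,da)$, $u(0,\cdot)=u_0$, with solution $u(t,a)=e^{-\mu t}u_0(a-t)$ for $a\ge t$ and $u(t,a)=e^{-\mu a}b(t-a)$ for $a\le t$; thus $b(t)=u(t,0)=\alpha f(\int_0^\infty\beta(a)u(t,a)\,da)$. *)

theory Defs
  imports "HOL-Analysis.Analysis"
begin

definition fR :: "real \<Rightarrow> real" where
  "fR x = x * exp (- x)"

definition a_star :: "real \<Rightarrow> (real \<Rightarrow> real) \<Rightarrow> ereal" where
  "a_star \<mu> \<beta> = Sup (ereal ` {a. 0 < a \<and> (LINT s:{a<..}|lborel. \<beta> s * exp (- \<mu> * s)) > 0})"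

definition in_M0 :: "real \<Rightarrow> (real \<Rightarrow> real) \<Rightarrow> (real \<Rightarrow> real) \<Rightarrow> bool" where
  "in_M0 \<mu> \<beta> u0 \<longleftrightarrow>
     set_integrable lborel {0<..} u0 \<and> (\<forall>a>0. 0 \<le> u0 a) \<and>
     (LINT a:{a. 0 < a \<and> ereal a < a_star \<mu> \<beta>}|lborel. u0 a) > 0"

end

theory Submission
  imports Defs
begin

text \<open>The birth rate b is nonnegative: on a short window after the last time up to which
  b is nonnegative, a negative minimum of b feeds back into the renewal integral only with a
  factor proportional to the window length. It is not identically zero, since otherwise the
  contribution of u0 vanishes for all t, which by Tonelli forces
  \<open>\<beta>(a) \<integral>\<^sub>0\<^sup>a u0 = 0\<close> for almost every a, contradicting u0 \<in> M0.
  Positivity at s propagates to s + p for every p in the essential support of the set of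
  fertile ages. Hence the set of times where b > 0 contains an interval of some length L and
  is closed under shifts by two such p < q with q - p < L; the shifted intervals
  (s0 + n p, s0 + L + n q) overlap and cover a half-line.\<close>

lemma fR_pos_iff: "fR x > 0 \<longleftrightarrow> x > 0"
  unfolding fR_def by (simp add: zero_less_mult_iff)

lemma fR_nonneg_iff: "fR x \<ge> 0 \<longleftrightarrow> x \<ge> 0"
  unfolding fR_def by (simp add: zero_le_mult_iff)

lemma fR_eq_0_iff: "fR x = 0 \<longleftrightarrow> x = 0"
  unfolding fR_def by simp

lemma fR_ge_of_neg:
  assumes "x < 0" and "- x \<le> K"
  shows "x * exp K \<le> fR x"
  unfolding fR_def using assms by (simp add: mult_left_mono_neg)

lemma set_integral_nonneg:
  fixes f :: "'a \<Rightarrow> real"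
  assumes "\<And>x. x \<in> A \<Longrightarrow> 0 \<le> f x"
  shows "0 \<le> (LINT x:A|M. f x)"
  unfolding set_lebesgue_integral_def
  by (rule integral_nonneg_AE) (auto simp: indicator_def assms)

lemma set_integrable_bounded:
  fixes f :: "'a \<Rightarrow> real"
  assumes "set_borel_measurable M A f" "A \<in> sets M" "emeasure M A < \<infinity>"
    and "\<And>x. x \<in> A \<Longrightarrow> \<bar>f x\<bar> \<le> B"
  shows "set_integrable M A f"
  using assms unfolding set_integrable_def set_borel_measurable_def
  by (intro integrableI_bounded_set[where A=A and B=B]) (auto simp: indicator_def)

lemma integral_pos_if_pos_on_pos_measure:
  fixes f :: "'a \<Rightarrow> real"
  assumes "integrable M f" "\<And>x. 0 \<le> f x"
    and "A \<in> sets M" "emeasure M A > 0" "\<And>x. x \<in> A \<Longrightarrow> f x > 0"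
  shows "integral\<^sup>L M f > 0"
proof (rule ccontr)
  assume "\<not> integral\<^sup>L M f > 0"
  moreover have "integral\<^sup>L M f \<ge> 0" using assms(2) by (simp add: integral_nonneg)
  ultimately have "integral\<^sup>L M f = 0" by simp
  then have "AE x in M. f x = 0"
    using integral_nonneg_eq_0_iff_AE[OF assms(1)] assms(2) by simp
  then have "AE x in M. x \<notin> A" by (rule AE_mp) (use assms(5) in fastforce)
  then have "A \<in> null_sets M" using assms(3) by (simp add: AE_iff_null_sets)
  then show False using assms(4) by (simp add: null_sets_def)
qed

definition ess_support :: "real set \<Rightarrow> real set" where
  "ess_support E = {x. \<forall>e>0. 0 < emeasure lborel (E \<inter> ball x e)}"

lemma negligible_diff_ess_support:
  assumes "E \<in> sets lborel"
  shows "negligible (E - ess_support E)"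
proof (subst locally_negligible_alt, intro ballI)
  fix x assume x: "x \<in> E - ess_support E"
  then obtain e where "e > 0" and null: "emeasure lborel (E \<inter> ball x e) = 0"
    unfolding ess_support_def by (auto simp: not_gr_zero)
  then have "negligible (E \<inter> ball x e)"
    using assms unfolding negligible_iff_null_sets by (auto intro: null_sets_completionI)
  then have "negligible ((E - ess_support E) \<inter> ball x e)"
    by (rule negligible_subset) auto
  then show "\<exists>U. openin (top_of_set (E - ess_support E)) U \<and> x \<in> U \<and> negligible U"
    using x \<open>e > 0\<close> by (intro exI[of _ "(E - ess_support E) \<inter> ball x e"]) auto
qed

lemma not_negligible_imp_close_points:
  fixes A :: "real set"
  assumes "\<not> negligible A" and "L > 0"
  shows "\<exists>x\<in>A. \<exists>y\<in>A. x < y \<and> y < x + L"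
proof (rule ccontr)
  assume far: "\<not> ?thesis"
  define piece where "piece k = A \<inter> {of_int k * L ..< (of_int k + 1) * L}" for k :: int
  have "negligible (piece k)" for k
  proof (cases "piece k = {}")
    case False
    then obtain x where x: "x \<in> piece k" by blast
    have "y = x" if y: "y \<in> piece k" for y
    proof -
      have "\<not> (x < y \<and> y < x + L)" "\<not> (y < x \<and> x < y + L)"
        using far x y unfolding piece_def by blast+
      then show ?thesis using x y unfolding piece_def by (auto simp: algebra_simps)
    qed
    then have "piece k \<subseteq> {x}" by blast
    then show ?thesis by (rule negligible_subset[OF negligible_sing])
  qed simp
  then have "negligible (\<Union>k. piece k)"
    by (intro negligible_countable_Union) auto
  moreover have "A \<subseteq> (\<Union>k. piece k)"
  proof
    fix x assume "x \<in> A"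
    moreover have "of_int \<lfloor>x / L\<rfloor> * L \<le> x" "x < (of_int \<lfloor>x / L\<rfloor> + 1) * L"
      using \<open>L > 0\<close> by (simp_all add: floor_divide_lower floor_divide_upper)
    ultimately have "x \<in> piece \<lfloor>x / L\<rfloor>" unfolding piece_def by simp
    then show "x \<in> (\<Union>k. piece k)" by blast
  qed
  ultimately show False using assms(1) by (metis negligible_subset)
qed

lemma ex_close_ess_support_points:
  assumes "E \<in> sets lborel" and "emeasure lborel E > 0" and "L > 0"
  shows "\<exists>p\<in>E \<inter> ess_support E. \<exists>q\<in>E \<inter> ess_support E. p < q \<and> q < p + L"
proof -
  have "\<not> negligible E"
    using assms(1,2) by (auto simp: negligible_iff_null_sets null_sets_completion_iff)
  moreover have "E = (E \<inter> ess_support E) \<union> (E - ess_support E)" by blast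
  ultimately have "\<not> negligible (E \<inter> ess_support E)"
    using negligible_diff_ess_support[OF assms(1)] negligible_Un by metis
  then show ?thesis using not_negligible_imp_close_points[OF _ assms(3)] by blast
qed

lemma shift_closed_contains_intervals:
  fixes S :: "real set" and s0 L p q :: real and n :: nat
  assumes interval: "{s0<..<s0 + L} \<subseteq> S"
    and pq: "p < q" "q < p + L"
    and shift_p: "\<And>s. s \<in> S \<Longrightarrow> s + p \<in> S"
    and shift_q: "\<And>s. s \<in> S \<Longrightarrow> s + q \<in> S"
  shows "{s0 + real n * p <..< s0 + L + real n * q} \<subseteq> S"
proof (induction n)
  case 0
  then show ?case using interval by simp
next
  case (Suc n)
  show ?case
  proof
    fix t assume t: "t \<in> {s0 + real (Suc n) * p <..< s0 + L + real (Suc n) * q}"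
    show "t \<in> S"
    proof (cases "t < s0 + L + n * q + p")
      case True
      then have "t - p \<in> {s0 + n * p <..< s0 + L + n * q}"
        using t by (simp add: algebra_simps)
      then have "t - p \<in> S" using Suc.IH by blast
      then show ?thesis using shift_p[of "t - p"] by simp
    next
      case False
      moreover have "n * p \<le> n * q" using pq by (simp add: mult_left_mono)
      ultimately have "t - q \<in> {s0 + n * p <..< s0 + L + n * q}"
        using t pq by (simp add: algebra_simps)
      then have "t - q \<in> S" using Suc.IH by blast
      then show ?thesis using shift_q[of "t - q"] by simp
    qed
  qed
qed

lemma eventually_mem_if_shift_closed:
  fixes S :: "real set"
  assumes interval: "{s0<..<s0 + L} \<subseteq> S"
    and p: "0 < p" and pq: "p < q" "q < p + L"
    and shift_p: "\<And>s. s \<in> S \<Longrightarrow> s + p \<in> S"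
    and shift_q: "\<And>s. s \<in> S \<Longrightarrow> s + q \<in> S"
  shows "eventually (\<lambda>t. t \<in> S) at_top"
proof -
  have "t \<in> S" if t: "t \<ge> s0 + p * (p / (q - p) + 1)" for t
  proof -
    \<comment> \<open>n is the last index with s0 + n p < t; past the threshold n (q - p) \<ge> p, which puts t
      below the right end s0 + L + n q of the n-th interval.\<close>
    define n where "n = nat (\<lceil>(t - s0) / p\<rceil> - 1)"
    have "p / (q - p) \<ge> 0" using p pq by simp
    moreover have ratio: "(t - s0) / p \<ge> p / (q - p) + 1"
      using t p by (simp add: pos_le_divide_eq mult.commute)
    moreover have "real n = of_int \<lceil>(t - s0) / p\<rceil> - 1"
      using ratio \<open>p / (q - p) \<ge> 0\<close> unfolding n_def by (simp add: of_nat_nat)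
    ultimately have n_lower: "real n \<ge> p / (q - p)"
      and n_bounds: "real n < (t - s0) / p" "(t - s0) / p \<le> real n + 1"
      by linarith+
    have "p \<le> real n * (q - p)" using n_lower pq by (simp add: pos_divide_le_eq)
    moreover have "real n * p < t - s0" "t - s0 \<le> real n * p + p"
      using n_bounds p by (simp_all add: pos_less_divide_eq pos_divide_le_eq algebra_simps)
    ultimately have "t \<in> {s0 + n * p <..< s0 + L + n * q}"
      using pq by (simp add: algebra_simps)
    then show ?thesis
      using shift_closed_contains_intervals[OF interval pq shift_p shift_q] by blast
  qed
  then show ?thesis by (rule eventually_at_top_linorderI)
qed

locale birth_renewal =
  fixes \<mu> \<alpha> :: real and \<beta> u0 b :: "real \<Rightarrow> real" and C :: real
  assumes mu_pos: "\<mu> > 0" and alpha_pos: "\<alpha> > 0"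
    and beta_meas[measurable]: "\<beta> \<in> borel_measurable borel"
    and beta_nonneg: "\<And>a. a > 0 \<Longrightarrow> 0 \<le> \<beta> a"
    and beta_bdd: "\<And>a. a > 0 \<Longrightarrow> \<beta> a \<le> C"
    and beta_norm: "(LINT a:{0<..}|lborel. \<beta> a * exp (- \<mu> * a)) = 1"
    and u0_M0: "in_M0 \<mu> \<beta> u0"
    and b_cont: "continuous_on {0..} b"
    and b_eq: "\<And>t. t \<ge> 0 \<Longrightarrow> b t = \<alpha> * fR ((LINT a:{t<..}|lborel. \<beta> a * exp (- \<mu> * t) * u0 (a - t))
                                 + (LINT a:{0<..<t}|lborel. \<beta> a * exp (- \<mu> * a) * b (t - a)))"
begin

definition initial_term :: "real \<Rightarrow> real" where
  "initial_term t = (LINT a:{t<..}|lborel. \<beta> a * exp (- \<mu> * t) * u0 (a - t))"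

definition renewal_term :: "real \<Rightarrow> real" where
  "renewal_term t = (LINT a:{0<..<t}|lborel. \<beta> a * exp (- \<mu> * a) * b (t - a))"

lemma b_eq_terms: "t \<ge> 0 \<Longrightarrow> b t = \<alpha> * fR (initial_term t + renewal_term t)"
  unfolding initial_term_def renewal_term_def by (rule b_eq)

lemma C_nonneg: "C \<ge> 0"
  using beta_nonneg[of 1] beta_bdd[of 1] by simp

lemma kernel_nonneg: "a > 0 \<Longrightarrow> 0 \<le> \<beta> a * exp (- \<mu> * a)"
  using beta_nonneg by simp

lemma kernel_le:
  assumes "a > 0"
  shows "\<beta> a * exp (- \<mu> * a) \<le> C"
proof -
  have "\<beta> a * exp (- \<mu> * a) \<le> \<beta> a * 1"
    using assms mu_pos beta_nonneg[OF assms] by (intro mult_left_mono) auto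
  then show ?thesis using beta_bdd[OF assms] by simp
qed

lemma initial_term_nonneg: "t \<ge> 0 \<Longrightarrow> initial_term t \<ge> 0"
  unfolding initial_term_def using u0_M0 beta_nonneg unfolding in_M0_def
  by (intro set_integral_nonneg) auto

lemma b_bounded: "\<exists>M\<ge>0. \<forall>x\<in>{0..T}. \<bar>b x\<bar> \<le> M"
proof -
  have "compact (b ` {0..T})"
    by (rule compact_continuous_image[OF continuous_on_subset[OF b_cont]]) auto
  then obtain M where "M > 0" "\<forall>y\<in>b ` {0..T}. norm y \<le> M"
    using compact_imp_bounded bounded_pos by metis
  then show ?thesis by (intro exI[of _ M]) auto
qed

lemma renewal_integrand_integrable:
  assumes "t \<ge> 0"
  shows "set_integrable lborel {0<..<t} (\<lambda>a. \<beta> a * exp (- \<mu> * a) * b (t - a))"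
proof -
  obtain M where M: "M \<ge> 0" "\<forall>x\<in>{0..t}. \<bar>b x\<bar> \<le> M" using b_bounded by blast
  have "(\<lambda>x. indicator {0<..<t} x *\<^sub>R b x) \<in> borel_measurable borel"
    by (rule borel_measurable_continuous_on_indicator)
       (auto intro: continuous_on_subset[OF b_cont])
  then have "(\<lambda>a. indicator {0<..<t} (t - a) *\<^sub>R b (t - a)) \<in> borel_measurable borel"
    by (rule measurable_compose[rotated]) simp
  moreover have "(\<lambda>a. indicator {0<..<t} a *\<^sub>R (\<beta> a * exp (- \<mu> * a) * b (t - a)))
      = (\<lambda>a. \<beta> a * exp (- \<mu> * a) * (indicator {0<..<t} (t - a) *\<^sub>R b (t - a)))"
    by (auto simp: fun_eq_iff indicator_def)
  ultimately have "set_borel_measurable lborel {0<..<t} (\<lambda>a. \<beta> a * exp (- \<mu> * a) * b (t - a))"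
    unfolding set_borel_measurable_def by simp
  then show ?thesis
  proof (rule set_integrable_bounded[where B="C * M"])
    fix a assume a: "a \<in> {0<..<t}"
    have "\<bar>\<beta> a * exp (- \<mu> * a)\<bar> \<le> C" using kernel_le kernel_nonneg a by auto
    moreover have "\<bar>b (t - a)\<bar> \<le> M" using M a by auto
    ultimately show "\<bar>\<beta> a * exp (- \<mu> * a) * b (t - a)\<bar> \<le> C * M"
      unfolding abs_mult using M C_nonneg by (intro mult_mono) auto
  qed (use assms in auto)
qed

lemma renewal_term_nonneg:
  assumes "\<And>s. 0 < s \<Longrightarrow> s < t \<Longrightarrow> b s \<ge> 0"
  shows "renewal_term t \<ge> 0"
  unfolding renewal_term_def using assms kernel_nonneg by (intro set_integral_nonneg) auto

lemma b_nonneg_if_nonneg_before: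
  assumes "t \<ge> 0" and "\<And>s. 0 < s \<Longrightarrow> s < t \<Longrightarrow> b s \<ge> 0"
  shows "b t \<ge> 0"
  using b_eq_terms[OF assms(1)] initial_term_nonneg[OF assms(1)] renewal_term_nonneg[OF assms(2)]
    alpha_pos by (simp add: fR_nonneg_iff)

lemma renewal_term_ge_min:
  assumes "0 \<le> t1" "t1 < s" and nonneg: "\<And>y. 0 \<le> y \<Longrightarrow> y \<le> t1 \<Longrightarrow> b y \<ge> 0"
    and "b s \<le> 0" and min: "\<And>y. t1 \<le> y \<Longrightarrow> y \<le> s \<Longrightarrow> b s \<le> b y"
  shows "C * b s * (s - t1) \<le> renewal_term s"
proof -
  have "0 \<le> s" using assms(1,2) by simp
  let ?lower = "\<lambda>a. C * b s * indicator {0<..<s - t1} a"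
  have "(LINT a:{0<..<s}|lborel. ?lower a) \<le> renewal_term s"
    unfolding renewal_term_def
  proof (rule set_integral_mono)
    show "set_integrable lborel {0<..<s} ?lower"
      by (rule set_integrable_bounded[where B="\<bar>C * b s\<bar>"])
         (auto simp: set_borel_measurable_def indicator_def \<open>0 \<le> s\<close>)
    show "set_integrable lborel {0<..<s} (\<lambda>a. \<beta> a * exp (- \<mu> * a) * b (s - a))"
      using assms by (intro renewal_integrand_integrable) simp
    fix a assume a: "a \<in> {0<..<s}"
    show "?lower a \<le> \<beta> a * exp (- \<mu> * a) * b (s - a)"
    proof (cases "a < s - t1")
      case True
      then have "\<beta> a * exp (- \<mu> * a) * b s \<le> \<beta> a * exp (- \<mu> * a) * b (s - a)"
        using a min kernel_nonneg by (intro mult_left_mono) auto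
      moreover have "C * b s \<le> \<beta> a * exp (- \<mu> * a) * b s"
        using a kernel_le \<open>b s \<le> 0\<close> by (intro mult_right_mono_neg) auto
      ultimately show ?thesis using True a by simp
    next
      case False
      then show ?thesis using a nonneg[of "s - a"] kernel_nonneg[of a] by simp
    qed
  qed
  also have "(LINT a:{0<..<s}|lborel. ?lower a) = (LINT a:{0<..<s - t1}|lborel. C * b s)"
    unfolding set_lebesgue_integral_def using assms(1)
    by (intro arg_cong[where f="integral\<^sup>L lborel"]) (auto simp: fun_eq_iff indicator_def)
  also have "\<dots> = C * b s * (s - t1)"
    using set_integral_const[of "{0<..<s - t1}" lborel "C * b s"] assms(2) by (simp add: mult.commute)
  finally show ?thesis .
qed

lemma b_ge_at_negative_min:
  assumes "0 \<le> t1" "t1 < s" and nonneg: "\<And>y. 0 \<le> y \<Longrightarrow> y \<le> t1 \<Longrightarrow> b y \<ge> 0"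
    and "b s < 0" and min: "\<And>y. t1 \<le> y \<Longrightarrow> y \<le> s \<Longrightarrow> b s \<le> b y"
    and "- (C * b s * (s - t1)) \<le> K"
  shows "\<alpha> * exp K * (C * b s * (s - t1)) \<le> b s"
proof -
  define I where "I = initial_term s + renewal_term s"
  have I_lower: "C * b s * (s - t1) \<le> I"
    using renewal_term_ge_min[OF assms(1,2) nonneg _ min] assms(1,2,4) initial_term_nonneg[of s]
    unfolding I_def by fastforce
  have b_s: "b s = \<alpha> * fR I" unfolding I_def using b_eq_terms assms(1,2) by simp
  have "I < 0"
  proof (rule ccontr)
    assume "\<not> I < 0"
    then have "\<alpha> * fR I \<ge> 0" using alpha_pos fR_nonneg_iff[of I] by simp
    then show False using b_s \<open>b s < 0\<close> by simp
  qed
  then have "I * exp K \<le> fR I" using I_lower assms(6) by (intro fR_ge_of_neg) auto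
  then have "\<alpha> * exp K * I \<le> b s" using b_s alpha_pos by (simp add: mult_ac)
  moreover have "\<alpha> * exp K * (C * b s * (s - t1)) \<le> \<alpha> * exp K * I"
    using I_lower alpha_pos by (intro mult_left_mono) auto
  ultimately show ?thesis by linarith
qed

lemma b_nonneg_extends:
  assumes "t1 \<ge> 0" and before: "\<And>s. 0 \<le> s \<Longrightarrow> s < t1 \<Longrightarrow> b s \<ge> 0"
  shows "\<exists>h>0. \<forall>s\<in>{t1..t1 + h}. b s \<ge> 0"
proof -
  obtain M where M: "M \<ge> 0" "\<forall>x\<in>{0..t1 + 1}. \<bar>b x\<bar> \<le> M" using b_bounded by blast
  define D where "D = \<alpha> * exp (C * M) * C"
  have "D \<ge> 0" unfolding D_def using alpha_pos C_nonneg by simp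
  define h where "h = 1 / (D + 1)"
  have h: "0 < h" "h \<le> 1" "D * h < 1"
    unfolding h_def using \<open>D \<ge> 0\<close> by (auto simp: field_simps)
  obtain s where s: "s \<in> {t1..t1 + h}" and s_min: "\<And>y. y \<in> {t1..t1 + h} \<Longrightarrow> b s \<le> b y"
    using continuous_attains_inf[of "{t1..t1 + h}" b] continuous_on_subset[OF b_cont]
      assms(1) h(1) by auto
  have nonneg_upto: "b y \<ge> 0" if "0 \<le> y" "y \<le> t1" for y
    using that before b_nonneg_if_nonneg_before[of y] by (cases "y = t1") auto
  have "b s \<ge> 0"
  proof (rule ccontr)
    assume "\<not> b s \<ge> 0"
    then have neg: "b s < 0" by simp
    then have "t1 < s" using s nonneg_upto[of t1] assms(1) by (cases "s = t1") auto
    have "\<bar>b s\<bar> \<le> M" using bspec[OF M(2), of s] s h(2) assms(1) by simp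
    then have "C * (- b s) * (s - t1) \<le> C * M * 1"
      using s h(2) neg C_nonneg by (intro mult_mono) (auto intro: mult_left_mono)
    then have "\<alpha> * exp (C * M) * (C * b s * (s - t1)) \<le> b s"
      using assms(1) \<open>t1 < s\<close> nonneg_upto neg s s_min
      by (intro b_ge_at_negative_min) auto
    moreover have "C * b s * h \<le> C * b s * (s - t1)"
      using s C_nonneg neg by (intro mult_left_mono_neg) (auto simp: mult_nonneg_nonpos)
    then have "\<alpha> * exp (C * M) * (C * b s * h) \<le> \<alpha> * exp (C * M) * (C * b s * (s - t1))"
      by (rule mult_left_mono) (use alpha_pos in simp)
    then have "D * h * b s \<le> \<alpha> * exp (C * M) * (C * b s * (s - t1))"
      unfolding D_def by (simp add: mult_ac)
    ultimately have "(1 - D * h) * b s \<ge> 0" by (simp add: algebra_simps)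
    then show False using h(3) neg by (simp add: zero_le_mult_iff)
  qed
  then show ?thesis using h(1) s_min by (intro exI[of _ h]) force
qed

lemma b_nonneg:
  assumes "t \<ge> 0"
  shows "b t \<ge> 0"
proof (rule ccontr)
  assume "\<not> b t \<ge> 0"
  define S where "S = {s. 0 \<le> s \<and> b s < 0}"
  have "t \<in> S" using assms \<open>\<not> b t \<ge> 0\<close> unfolding S_def by simp
  have "bdd_below S" unfolding S_def by (rule bdd_belowI[of _ 0]) auto
  define t1 where "t1 = Inf S"
  have "t1 \<ge> 0" unfolding t1_def using \<open>t \<in> S\<close> by (intro cInf_greatest) (auto simp: S_def)
  have "b s \<ge> 0" if "0 \<le> s" "s < t1" for s
    using that cInf_lower[OF _ \<open>bdd_below S\<close>, of s] unfolding t1_def S_def by force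
  then obtain h where "h > 0" and h: "\<forall>s\<in>{t1..t1 + h}. b s \<ge> 0"
    using b_nonneg_extends[OF \<open>t1 \<ge> 0\<close>] by blast
  obtain s where "s \<in> S" "s < t1 + h"
    using cInf_less_iff[of S "t1 + h"] \<open>t \<in> S\<close> \<open>bdd_below S\<close> \<open>h > 0\<close> unfolding t1_def by auto
  moreover have "t1 \<le> s" unfolding t1_def using \<open>s \<in> S\<close> \<open>bdd_below S\<close> by (rule cInf_lower)
  ultimately have "b s \<ge> 0" using h by simp
  then show False using \<open>s \<in> S\<close> unfolding S_def by simp
qed

definition u0_on_pos :: "real \<Rightarrow> real" where
  "u0_on_pos x = indicator {0<..} x * u0 x"

definition initial_mass :: "real \<Rightarrow> ennreal" where
  "initial_mass x = (\<integral>\<^sup>+ s. ennreal (indicator {..<x} s * u0_on_pos s) \<partial>lborel)"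

lemma u0_on_pos_integrable: "integrable lborel u0_on_pos"
  using u0_M0 unfolding in_M0_def set_integrable_def u0_on_pos_def by simp

lemma u0_on_pos_measurable[measurable]: "u0_on_pos \<in> borel_measurable borel"
  using borel_measurable_integrable[OF u0_on_pos_integrable] by simp

lemma u0_on_pos_nonneg: "u0_on_pos x \<ge> 0"
  using u0_M0 unfolding in_M0_def u0_on_pos_def by (auto simp: indicator_def)

lemma initial_mass_mono: "x \<le> y \<Longrightarrow> initial_mass x \<le> initial_mass y"
  unfolding initial_mass_def
  by (intro nn_integral_mono ennreal_leI) (auto simp: indicator_def u0_on_pos_nonneg)

lemma initial_mass_eq_shifted:
  "(\<integral>\<^sup>+ t. ennreal (indicator {0<..} t * u0_on_pos (a - t)) \<partial>lborel) = initial_mass a"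
proof -
  have "(\<lambda>t. ennreal (indicator {0<..} t * u0_on_pos (a - t))) \<in> borel_measurable borel"
    by measurable
  from nn_integral_real_affine[OF this, of "- 1" a]
  have "(\<integral>\<^sup>+ t. ennreal (indicator {0<..} t * u0_on_pos (a - t)) \<partial>lborel)
      = (\<integral>\<^sup>+ x. ennreal (indicator {0<..} (a - x) * u0_on_pos x) \<partial>lborel)"
    by simp
  also have "\<dots> = initial_mass a" unfolding initial_mass_def
    by (intro nn_integral_cong) (auto simp: indicator_def)
  finally show ?thesis .
qed

lemma initial_integrand_integrable:
  assumes "t \<ge> 0"
  shows "integrable lborel (\<lambda>a. \<beta> a * u0_on_pos (a - t))"
proof (rule Bochner_Integration.integrable_bound)
  show "integrable lborel (\<lambda>a. C * u0_on_pos (a - t))"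
    using lborel_integrable_real_affine[OF u0_on_pos_integrable, of 1 "- t"] by simp
  have "\<bar>\<beta> a * u0_on_pos (a - t)\<bar> \<le> C * u0_on_pos (a - t)" for a
  proof (cases "a - t > 0")
    case True
    then have "a > 0" using assms by simp
    then show ?thesis using beta_nonneg beta_bdd u0_on_pos_nonneg
      by (simp add: abs_mult mult_right_mono)
  qed (simp add: u0_on_pos_def)
  then show "AE a in lborel. norm (\<beta> a * u0_on_pos (a - t)) \<le> norm (C * u0_on_pos (a - t))"
    by (intro AE_I2) (simp add: order_trans[OF _ abs_ge_self])
qed simp

lemma initial_term_eq:
  assumes "t \<ge> 0"
  shows "initial_term t = exp (- \<mu> * t) * (LINT a|lborel. \<beta> a * u0_on_pos (a - t))"
  unfolding initial_term_def set_lebesgue_integral_def integral_mult_right_zero[symmetric]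
  using assms by (intro Bochner_Integration.integral_cong) (auto simp: u0_on_pos_def indicator_def)

lemma initial_integrand_nonneg: "t \<ge> 0 \<Longrightarrow> 0 \<le> \<beta> a * u0_on_pos (a - t)"
  using beta_nonneg[of a] u0_on_pos_nonneg[of "a - t"]
  by (cases "a - t > 0") (auto simp: u0_on_pos_def)

lemma beta_initial_mass_AE_zero:
  assumes "\<And>t. t > 0 \<Longrightarrow> initial_term t = 0"
  shows "AE a in lborel. a > 0 \<longrightarrow> ennreal (\<beta> a) * initial_mass a = 0"
proof -
  define f where "f a t = ennreal (indicator {0<..} t * \<beta> a * u0_on_pos (a - t))" for a t
  have f_meas: "case_prod f \<in> borel_measurable (lborel \<Otimes>\<^sub>M lborel)"
    unfolding f_def by measurable
  have "(\<integral>\<^sup>+ a. f a t \<partial>lborel) = 0" for t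
  proof (cases "t > 0")
    case True
    then have "(LINT a|lborel. \<beta> a * u0_on_pos (a - t)) = 0"
      using assms[OF True] initial_term_eq[of t] by simp
    then have "AE a in lborel. \<beta> a * u0_on_pos (a - t) = 0"
      using integral_nonneg_eq_0_iff_AE[OF initial_integrand_integrable] initial_integrand_nonneg
        True by simp
    then have "AE a in lborel. f a t = 0"
      by (rule AE_mp) (simp add: f_def)
    then show ?thesis by (simp add: nn_integral_cong_AE)
  qed (simp add: f_def)
  then have "(\<integral>\<^sup>+ a. (\<integral>\<^sup>+ t. f a t \<partial>lborel) \<partial>lborel) = 0"
    using lborel_pair.Fubini'[OF f_meas] by simp
  then have "AE a in lborel. (\<integral>\<^sup>+ t. f a t \<partial>lborel) = 0"
    using lborel.borel_measurable_nn_integral[OF f_meas] by (subst (asm) nn_integral_0_iff_AE) simp_all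
  then show ?thesis
  proof (rule AE_mp, intro AE_I2 impI)
    fix a :: real assume "a > 0" and "(\<integral>\<^sup>+ t. f a t \<partial>lborel) = 0"
    have "(\<integral>\<^sup>+ t. f a t \<partial>lborel)
        = (\<integral>\<^sup>+ t. ennreal (\<beta> a) * ennreal (indicator {0<..} t * u0_on_pos (a - t)) \<partial>lborel)"
      unfolding f_def using beta_nonneg[OF \<open>a > 0\<close>] u0_on_pos_nonneg
      by (intro nn_integral_cong) (simp add: ennreal_mult[symmetric] mult_ac)
    also have "\<dots> = ennreal (\<beta> a) * initial_mass a"
      by (subst nn_integral_cmult) (simp_all add: initial_mass_eq_shifted)
    finally show "ennreal (\<beta> a) * initial_mass a = 0" using \<open>(\<integral>\<^sup>+ t. f a t \<partial>lborel) = 0\<close> by simp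
  qed
qed

lemma initial_mass_pos: "\<exists>q>0. ereal q < a_star \<mu> \<beta> \<and> initial_mass q \<noteq> 0"
proof (rule ccontr)
  assume "\<not> ?thesis"
  then have mass0: "initial_mass q = 0" if "0 < q" "ereal q < a_star \<mu> \<beta>" for q
    using that by blast
  define Q where "Q = {q \<in> \<rat>. 0 < q \<and> ereal q < a_star \<mu> \<beta>}"
  have "countable Q" unfolding Q_def by (rule countable_subset[OF _ countable_rat]) auto
  moreover have "AE s in lborel. s < q \<longrightarrow> u0_on_pos s = 0" if "q \<in> Q" for q
  proof -
    have "initial_mass q = 0" using mass0[of q] that unfolding Q_def by simp
    then have "AE s in lborel. ennreal (indicator {..<q} s * u0_on_pos s) = 0"
      unfolding initial_mass_def by (subst (asm) nn_integral_0_iff_AE) auto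
    then show ?thesis by (rule AE_mp) (auto simp: indicator_def u0_on_pos_nonneg)
  qed
  ultimately have "AE s in lborel. \<forall>q\<in>Q. s < q \<longrightarrow> u0_on_pos s = 0"
    by (subst AE_ball_countable) auto
  then have "AE s in lborel. indicator {a. 0 < a \<and> ereal a < a_star \<mu> \<beta>} s *\<^sub>R u0 s = 0"
  proof (rule AE_mp, intro AE_I2 impI)
    fix s assume vanish: "\<forall>q\<in>Q. s < q \<longrightarrow> u0_on_pos s = 0"
    show "indicator {a. 0 < a \<and> ereal a < a_star \<mu> \<beta>} s *\<^sub>R u0 s = 0"
    proof (cases "0 < s \<and> ereal s < a_star \<mu> \<beta>")
      case True
      then obtain z where z: "s < z" "ereal z < a_star \<mu> \<beta>" using ereal_dense2 by force
      then obtain q where "q \<in> \<rat>" "s < q" "q < z" using Rats_dense_in_real by blast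
      then have "q \<in> Q" unfolding Q_def using True z by (auto intro: order.strict_trans[of _ "ereal z"])
      then have "u0_on_pos s = 0" using vanish \<open>s < q\<close> by blast
      then show ?thesis using True by (simp add: u0_on_pos_def)
    qed simp
  qed
  then have "(LINT a:{a. 0 < a \<and> ereal a < a_star \<mu> \<beta>}|lborel. u0 a) = 0"
    unfolding set_lebesgue_integral_def by (rule integral_eq_zero_AE)
  then show False using u0_M0 unfolding in_M0_def by simp
qed

lemma not_AE_beta_initial_mass_eq_0:
  "\<not> (AE a in lborel. a > 0 \<longrightarrow> ennreal (\<beta> a) * initial_mass a = 0)"
proof
  assume beta_mass: "AE a in lborel. a > 0 \<longrightarrow> ennreal (\<beta> a) * initial_mass a = 0"
  obtain q where q: "0 < q" "ereal q < a_star \<mu> \<beta>" "initial_mass q \<noteq> 0"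
    using initial_mass_pos by blast
  then obtain a1 where "0 < a1" and a1: "q < a1" "(LINT s:{a1<..}|lborel. \<beta> s * exp (- \<mu> * s)) > 0"
    unfolding a_star_def less_Sup_iff by auto
  have "AE s in lborel. indicator {a1<..} s *\<^sub>R (\<beta> s * exp (- \<mu> * s)) = 0"
    using beta_mass
  proof (rule AE_mp, intro AE_I2 impI)
    fix s assume vanish: "s > 0 \<longrightarrow> ennreal (\<beta> s) * initial_mass s = 0"
    show "indicator {a1<..} s *\<^sub>R (\<beta> s * exp (- \<mu> * s)) = 0"
    proof (cases "s > a1")
      case True
      then have "initial_mass q \<le> initial_mass s" using a1 by (intro initial_mass_mono) simp
      then have "initial_mass s \<noteq> 0" using q(3) by (auto simp: le_zero_eq)
      then have "\<beta> s = 0" using vanish True \<open>0 < a1\<close> beta_nonneg[of s] by simp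
      then show ?thesis by simp
    qed simp
  qed
  then have "(LINT s:{a1<..}|lborel. \<beta> s * exp (- \<mu> * s)) = 0"
    unfolding set_lebesgue_integral_def by (rule integral_eq_zero_AE)
  then show False using a1 by simp
qed

lemma b_pos_somewhere: "\<exists>t\<ge>0. b t > 0"
proof (rule ccontr)
  assume "\<not> ?thesis"
  then have b0: "b t = 0" if "t \<ge> 0" for t using b_nonneg[OF that] that by force
  have "renewal_term t = 0" if "t \<ge> 0" for t
    unfolding renewal_term_def using b0 by (subst set_lebesgue_integral_cong[where g="\<lambda>_. 0"]) auto
  then have "initial_term t = 0" if "t > 0" for t
    using b_eq_terms[of t] b0[of t] that alpha_pos by (simp add: fR_eq_0_iff)
  then show False using beta_initial_mass_AE_zero not_AE_beta_initial_mass_eq_0 by blast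
qed

lemma b_pos_near:
  assumes "t \<ge> 0" and "b t > 0"
  shows "\<exists>d>0. \<forall>x\<ge>0. \<bar>x - t\<bar> < d \<longrightarrow> b x > 0"
proof -
  obtain d where "d > 0" and d: "\<forall>x\<in>{0..}. dist x t < d \<longrightarrow> dist (b x) (b t) < b t"
    using b_cont assms unfolding continuous_on_iff by fastforce
  then show ?thesis by (intro exI[of _ d]) (auto simp: dist_real_def)
qed

definition fertile_ages :: "real set" where
  "fertile_ages = {a. 0 < a \<and> 0 < \<beta> a}"

lemma fertile_ages_sets[measurable]: "fertile_ages \<in> sets borel"
  unfolding fertile_ages_def by measurable

lemma emeasure_fertile_ages_pos: "emeasure lborel fertile_ages > 0"
proof (rule ccontr)
  assume "\<not> ?thesis"
  then have "fertile_ages \<in> null_sets lborel" by (intro null_setsI) (auto simp: not_gr_zero)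
  then have "AE a in lborel. a \<notin> fertile_ages" by (rule AE_not_in)
  then have "AE a in lborel. indicator {0<..} a *\<^sub>R (\<beta> a * exp (- \<mu> * a)) = 0"
  proof (rule AE_mp, intro AE_I2 impI)
    fix a assume "a \<notin> fertile_ages"
    then show "indicator {0<..} a *\<^sub>R (\<beta> a * exp (- \<mu> * a)) = 0"
      using beta_nonneg[of a] unfolding fertile_ages_def by (auto simp: indicator_def)
  qed
  then have "(LINT a:{0<..}|lborel. \<beta> a * exp (- \<mu> * a)) = 0"
    unfolding set_lebesgue_integral_def by (rule integral_eq_zero_AE)
  then show False using beta_norm by simp
qed

lemma b_pos_shift:
  assumes p: "p \<in> fertile_ages \<inter> ess_support fertile_ages" and "s > 0" and "b s > 0"
  shows "b (s + p) > 0"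
proof -
  define t where "t = s + p"
  have "p > 0" using p unfolding fertile_ages_def by auto
  then have "t \<ge> 0" using \<open>s > 0\<close> unfolding t_def by simp
  obtain d where "d > 0" and d: "\<forall>x\<ge>0. \<bar>x - s\<bar> < d \<longrightarrow> b x > 0"
    using b_pos_near[of s] assms by auto
  define e where "e = min d (min s p)"
  have "e > 0" using \<open>d > 0\<close> \<open>s > 0\<close> \<open>p > 0\<close> unfolding e_def by simp
  define A where "A = fertile_ages \<inter> ball p e"
  have "emeasure lborel A > 0" using p \<open>e > 0\<close> unfolding A_def ess_support_def by auto
  have A_pos: "a \<in> {0<..<t} \<and> \<beta> a * exp (- \<mu> * a) * b (t - a) > 0" if "a \<in> A" for a
  proof -
    have "\<bar>a - p\<bar> < e" using that unfolding A_def by (auto simp: dist_real_def abs_minus_commute)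
    then have "a \<in> {0<..<t}" "t - a \<ge> 0" "\<bar>(t - a) - s\<bar> < d"
      unfolding t_def e_def by auto
    moreover have "\<beta> a > 0" using that unfolding A_def fertile_ages_def by auto
    ultimately show ?thesis using d by simp
  qed
  have "renewal_term t > 0"
    unfolding renewal_term_def set_lebesgue_integral_def
  proof (rule integral_pos_if_pos_on_pos_measure)
    show "integrable lborel (\<lambda>a. indicator {0<..<t} a *\<^sub>R (\<beta> a * exp (- \<mu> * a) * b (t - a)))"
      using renewal_integrand_integrable[OF \<open>t \<ge> 0\<close>] unfolding set_integrable_def .
    show "0 \<le> indicator {0<..<t} a *\<^sub>R (\<beta> a * exp (- \<mu> * a) * b (t - a))" for a
      using kernel_nonneg[of a] b_nonneg[of "t - a"] by (simp add: indicator_def)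
    show "A \<in> sets lborel" unfolding A_def by simp
  qed (use \<open>emeasure lborel A > 0\<close> A_pos in auto)
  then have "initial_term t + renewal_term t > 0" using initial_term_nonneg[OF \<open>t \<ge> 0\<close>] by simp
  then show ?thesis using b_eq_terms[OF \<open>t \<ge> 0\<close>] alpha_pos fR_pos_iff unfolding t_def by simp
qed

lemma eventually_b_pos: "eventually (\<lambda>t. b t > 0) at_top"
proof -
  obtain t where "t \<ge> 0" "b t > 0" using b_pos_somewhere by blast
  then obtain d where "d > 0" and d: "\<forall>x\<ge>0. \<bar>x - t\<bar> < d \<longrightarrow> b x > 0"
    using b_pos_near by blast
  obtain p q where pq: "p \<in> fertile_ages \<inter> ess_support fertile_ages"
      "q \<in> fertile_ages \<inter> ess_support fertile_ages" "p < q" "q < p + d"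
    using ex_close_ess_support_points[OF _ emeasure_fertile_ages_pos \<open>d > 0\<close>] by auto
  define S where "S = {s. 0 < s \<and> 0 < b s}"
  have "{t<..<t + d} \<subseteq> S" using d \<open>t \<ge> 0\<close> unfolding S_def by auto
  then have "eventually (\<lambda>s. s \<in> S) at_top"
  proof (rule eventually_mem_if_shift_closed)
    show "0 < p" using pq(1) unfolding fertile_ages_def by simp
    show "s + p \<in> S" "s + q \<in> S" if "s \<in> S" for s
      using that b_pos_shift[OF pq(1)] b_pos_shift[OF pq(2)] pq(1,2)
      unfolding S_def fertile_ages_def by auto
  qed (use pq in auto)
  then show ?thesis by (rule eventually_mono) (simp add: S_def)
qed

end

theorem proposition3p6:
  fixes \<mu> \<alpha> :: real and \<beta> u0 b :: "real \<Rightarrow> real"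
  assumes mu_pos: "\<mu> > 0" and alpha_pos: "\<alpha> > 0"
    and beta_meas: "\<beta> \<in> borel_measurable lborel"
    and beta_nonneg: "\<forall>a>0. 0 \<le> \<beta> a"
    and beta_bdd: "\<exists>C. \<forall>a>0. \<beta> a \<le> C"
    and beta_norm: "(LINT a:{0<..}|lborel. \<beta> a * exp (- \<mu> * a)) = 1"
    and u0_M0: "in_M0 \<mu> \<beta> u0"
    and b_cont: "continuous_on {0..} b"
    and b_eq: "\<forall>t\<ge>0. b t = \<alpha> * fR ((LINT a:{t<..}|lborel. \<beta> a * exp (- \<mu> * t) * u0 (a - t))
                                 + (LINT a:{0<..<t}|lborel. \<beta> a * exp (- \<mu> * a) * b (t - a)))"
  shows "\<exists>t0>0. \<forall>t\<ge>t0. b t > 0"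
proof -
  obtain C where "\<forall>a>0. \<beta> a \<le> C" using beta_bdd by blast
  then interpret birth_renewal \<mu> \<alpha> \<beta> u0 b C
    using assms by unfold_locales auto
  obtain t0 where "\<forall>t\<ge>t0. b t > 0"
    using eventually_b_pos unfolding eventually_at_top_linorder by blast
  then show ?thesis by (intro exI[of _ "max t0 1"]) auto
qed

end
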